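(* Let $\mathcal{C}$ be a strongly connected category with all small products and let $\mathcal{D}$ be an essentially small category. Then any functor $\mathcal{C}\to\mathcal{D}$ is isomorphic to a constant functor.
   Context: A category is strongly connected if for any two objects $c,c'$ the hom-set $\mathcal{C}(c,c')$ is non-empty. A category is essentially small if it is equivalent to a small category. *)

theory Defs
  imports Main
begin

text \<open>Categories given by explicit object/arrow carriers. Comp C g f is g after f.\<close>

record ('o,'a) category =
  Obj  :: "'o set"
  Arr  :: "'a set"
  Dom  :: "'a \<Rightarrow> 'o"
  Cod  :: "'a \<Rightarrow> 'o"
  Id   :: "'o \<Rightarrow> 'a"
  Comp :: "'a \<Rightarrow> 'a \<Rightarrow> 'a"

definition hom :: "('o,'a) category \<Rightarrow> 'o \<Rightarrow> 'o \<Rightarrow> 'a set" where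
  "hom C x y = {f \<in> Arr C. Dom C f = x \<and> Cod C f = y}"

definition is_category :: "('o,'a) category \<Rightarrow> bool" where
  "is_category C \<longleftrightarrow>
     (\<forall>f\<in>Arr C. Dom C f \<in> Obj C \<and> Cod C f \<in> Obj C) \<and>
     (\<forall>x\<in>Obj C. Id C x \<in> hom C x x) \<and>
     (\<forall>x y z f g. f \<in> hom C x y \<longrightarrow> g \<in> hom C y z \<longrightarrow> Comp C g f \<in> hom C x z) \<and>
     (\<forall>x y f. f \<in> hom C x y \<longrightarrow> Comp C (Id C y) f = f \<and> Comp C f (Id C x) = f) \<and>
     (\<forall>w x y z f g h. f \<in> hom C w x \<longrightarrow> g \<in> hom C x y \<longrightarrow> h \<in> hom C y z \<longrightarrow>
         Comp C h (Comp C g f) = Comp C (Comp C h g) f)"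

definition is_functor ::
  "('o,'a) category \<Rightarrow> ('p,'b) category \<Rightarrow> ('o \<Rightarrow> 'p) \<Rightarrow> ('a \<Rightarrow> 'b) \<Rightarrow> bool" where
  "is_functor C D Fo Fa \<longleftrightarrow>
     (\<forall>x\<in>Obj C. Fo x \<in> Obj D) \<and>
     (\<forall>x y f. f \<in> hom C x y \<longrightarrow> Fa f \<in> hom D (Fo x) (Fo y)) \<and>
     (\<forall>x\<in>Obj C. Fa (Id C x) = Id D (Fo x)) \<and>
     (\<forall>x y z f g. f \<in> hom C x y \<longrightarrow> g \<in> hom C y z \<longrightarrow> Fa (Comp C g f) = Comp D (Fa g) (Fa f))"

definition is_iso :: "('o,'a) category \<Rightarrow> 'a \<Rightarrow> bool" where
  "is_iso C f \<longleftrightarrow> f \<in> Arr C \<and>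
     (\<exists>g \<in> hom C (Cod C f) (Dom C f). Comp C g f = Id C (Dom C f) \<and> Comp C f g = Id C (Cod C f))"

definition nat_iso ::
  "('o,'a) category \<Rightarrow> ('p,'b) category \<Rightarrow> ('o \<Rightarrow> 'p) \<Rightarrow> ('a \<Rightarrow> 'b)
     \<Rightarrow> ('o \<Rightarrow> 'p) \<Rightarrow> ('a \<Rightarrow> 'b) \<Rightarrow> ('o \<Rightarrow> 'b) \<Rightarrow> bool" where
  "nat_iso C D Fo Fa Go Ga \<eta> \<longleftrightarrow>
     (\<forall>c\<in>Obj C. \<eta> c \<in> hom D (Fo c) (Go c) \<and> is_iso D (\<eta> c)) \<and>
     (\<forall>f\<in>Arr C. Comp D (Ga f) (\<eta> (Dom C f)) = Comp D (\<eta> (Cod C f)) (Fa f))"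

definition equivalent_categories :: "('o,'a) category \<Rightarrow> ('p,'b) category \<Rightarrow> bool" where
  "equivalent_categories C D \<longleftrightarrow>
     (\<exists>Fo Fa Go Ga \<eta> \<epsilon>. is_functor C D Fo Fa \<and> is_functor D C Go Ga \<and>
        nat_iso C C id id (Go \<circ> Fo) (Ga \<circ> Fa) \<eta> \<and>
        nat_iso D D (Fo \<circ> Go) (Fa \<circ> Ga) id id \<epsilon>)"

definition strongly_connected :: "('o,'a) category \<Rightarrow> bool" where
  "strongly_connected C \<longleftrightarrow> (\<forall>c\<in>Obj C. \<forall>c'\<in>Obj C. hom C c c' \<noteq> {})"

definition is_product ::
  "('o,'a) category \<Rightarrow> 'i set \<Rightarrow> ('i \<Rightarrow> 'o) \<Rightarrow> 'o \<Rightarrow> ('i \<Rightarrow> 'a) \<Rightarrow> bool" where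
  "is_product C I X P p \<longleftrightarrow> P \<in> Obj C \<and> (\<forall>i\<in>I. p i \<in> hom C P (X i)) \<and>
     (\<forall>Q f. Q \<in> Obj C \<longrightarrow> (\<forall>i\<in>I. f i \<in> hom C Q (X i)) \<longrightarrow>
        (\<exists>!u. u \<in> hom C Q P \<and> (\<forall>i\<in>I. Comp C (p i) u = f i)))"

text \<open>Size conventions: the universe of small sets is modelled by a type 'u;
  a set is small iff it is (indexed by) a subset of 'u.\<close>

definition has_small_products :: "'u itself \<Rightarrow> ('o,'a) category \<Rightarrow> bool" where
  "has_small_products (U :: 'u itself) C \<longleftrightarrow>
     (\<forall>(I :: 'u set) X. (\<forall>i\<in>I. X i \<in> Obj C) \<longrightarrow> (\<exists>P p. is_product C I X P p))"

definition essentially_small :: "'u itself \<Rightarrow> ('o,'a) category \<Rightarrow> bool" where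
  "essentially_small (U :: 'u itself) C \<longleftrightarrow>
     (\<exists>E :: ('u,'u) category. is_category E \<and> equivalent_categories C E)"

end

theory Submission
  imports Defs
begin

text \<open>Suppose a functor \<open>F\<close> into an essentially small category distinguished two parallel
  arrows \<open>f, g : a \<rightarrow> b\<close>. In the power \<open>b\<^sup>U\<close> over the universe \<open>U\<close> of small sets, every
  \<open>S \<subseteq> U\<close> yields the arrow \<open>a \<rightarrow> b\<^sup>U\<close> whose \<open>i\<close>-th component is \<open>f\<close> for \<open>i \<in> S\<close> and \<open>g\<close>
  otherwise, and \<open>F\<close> maps these to pairwise distinct arrows. A faithful functor into a small
  category then injects the power set of \<open>U\<close> into \<open>U\<close>, contradicting Cantor. So \<open>F\<close>
  identifies parallel arrows; in a strongly connected category there are arrows both ways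
  between any two objects, hence \<open>F\<close> sends every arrow to an isomorphism and is naturally
  isomorphic to the constant functor at \<open>F c\<^sub>0\<close> for any object \<open>c\<^sub>0\<close>, e.g. the empty product.\<close>

lemma hom_Obj: "is_category C \<Longrightarrow> f \<in> hom C x y \<Longrightarrow> x \<in> Obj C \<and> y \<in> Obj C"
  unfolding is_category_def hom_def by blast

lemma Id_hom: "is_category C \<Longrightarrow> x \<in> Obj C \<Longrightarrow> Id C x \<in> hom C x x"
  unfolding is_category_def by blast

lemma Comp_hom:
  "is_category C \<Longrightarrow> f \<in> hom C x y \<Longrightarrow> g \<in> hom C y z \<Longrightarrow> Comp C g f \<in> hom C x z"
  unfolding is_category_def by blast

lemma Comp_Id_left: "is_category C \<Longrightarrow> f \<in> hom C x y \<Longrightarrow> Comp C (Id C y) f = f"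
  unfolding is_category_def by blast

lemma Comp_assoc:
  "is_category C \<Longrightarrow> f \<in> hom C w x \<Longrightarrow> g \<in> hom C x y \<Longrightarrow> h \<in> hom C y z \<Longrightarrow>
    Comp C h (Comp C g f) = Comp C (Comp C h g) f"
  unfolding is_category_def by blast

lemma functor_Obj: "is_functor C D Fo Fa \<Longrightarrow> x \<in> Obj C \<Longrightarrow> Fo x \<in> Obj D"
  unfolding is_functor_def by blast

lemma functor_hom: "is_functor C D Fo Fa \<Longrightarrow> f \<in> hom C x y \<Longrightarrow> Fa f \<in> hom D (Fo x) (Fo y)"
  unfolding is_functor_def by blast

lemma functor_Id: "is_functor C D Fo Fa \<Longrightarrow> x \<in> Obj C \<Longrightarrow> Fa (Id C x) = Id D (Fo x)"
  unfolding is_functor_def by blast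

lemma functor_Comp:
  "is_functor C D Fo Fa \<Longrightarrow> f \<in> hom C x y \<Longrightarrow> g \<in> hom C y z \<Longrightarrow>
    Fa (Comp C g f) = Comp D (Fa g) (Fa f)"
  unfolding is_functor_def by blast

lemma is_isoI:
  assumes "f \<in> hom C x y" and "g \<in> hom C y x"
    and "Comp C g f = Id C x" and "Comp C f g = Id C y"
  shows "is_iso C f"
  using assms unfolding is_iso_def hom_def by auto

lemma iso_cancel_left:
  assumes C: "is_category C" and "is_iso C h" and h: "h \<in> hom C y z"
    and f: "f \<in> hom C x y" and g: "g \<in> hom C x y"
    and eq: "Comp C h f = Comp C h g"
  shows "f = g"
proof -
  obtain h' where h': "h' \<in> hom C z y" "Comp C h' h = Id C y"
    using \<open>is_iso C h\<close> h unfolding is_iso_def hom_def by auto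
  have "f = Comp C (Comp C h' h) f" using h'(2) Comp_Id_left[OF C f] by simp
  also have "\<dots> = Comp C h' (Comp C h f)" using Comp_assoc[OF C f h h'(1)] by simp
  also have "\<dots> = Comp C h' (Comp C h g)" using eq by simp
  also have "\<dots> = Comp C (Comp C h' h) g" using Comp_assoc[OF C g h h'(1)] by simp
  also have "\<dots> = g" using h'(2) Comp_Id_left[OF C g] by simp
  finally show "f = g" .
qed

lemma nat_iso_from_id_faithful:
  assumes C: "is_category C" and \<eta>: "nat_iso C C id id Go Ga \<eta>"
    and f: "f \<in> hom C x y" and g: "g \<in> hom C x y" and eq: "Ga f = Ga g"
  shows "f = g"
proof -
  have y: "y \<in> Obj C" using hom_Obj[OF C f] by blast
  have \<eta>y: "\<eta> y \<in> hom C y (Go y)" "is_iso C (\<eta> y)"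
    using \<eta> y unfolding nat_iso_def by auto
  have "Comp C (\<eta> y) f = Comp C (Ga f) (\<eta> x)" "Comp C (\<eta> y) g = Comp C (Ga g) (\<eta> x)"
    using \<eta> f g unfolding nat_iso_def hom_def by auto
  then have "Comp C (\<eta> y) f = Comp C (\<eta> y) g" using eq by simp
  then show "f = g" using iso_cancel_left[OF C \<eta>y(2,1) f g] by blast
qed

lemma essentially_small_hom_inj:
  fixes D :: "('p,'b) category"
  assumes "is_category D" and "essentially_small TYPE('u) D"
  obtains H :: "'b \<Rightarrow> 'u" where "\<And>x y. inj_on H (hom D x y)"
proof -
  obtain Fo :: "'p \<Rightarrow> 'u" and Fa :: "'b \<Rightarrow> 'u" and Go Ga \<eta>
    where "nat_iso D D id id (Go \<circ> Fo) (Ga \<circ> Fa) \<eta>"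
    using assms(2) unfolding essentially_small_def equivalent_categories_def by blast
  then have "inj_on Fa (hom D x y)" for x y
    using nat_iso_from_id_faithful[OF assms(1)] by (fastforce intro: inj_onI)
  then show thesis by (rule that)
qed

lemma no_inj_Pow: "\<not> inj (G :: 'u set \<Rightarrow> 'u)"
proof
  assume "inj G"
  then have "range (inv G) = Pow UNIV" using inj_imp_surj_inv by simp
  then show False using Cantors_theorem by blast
qed

lemma product_tuple:
  assumes "is_product C I X P p" and "Q \<in> Obj C" and "\<forall>i\<in>I. f i \<in> hom C Q (X i)"
  obtains u where "u \<in> hom C Q P" and "\<forall>i\<in>I. Comp C (p i) u = f i"
  using assms unfolding is_product_def by blast

lemma power_tuples_inj:
  assumes "is_category C" and "is_functor C D Fo Fa"
    and "is_product C (UNIV :: 'u set) (\<lambda>_. b) P p"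
    and f: "f \<in> hom C a b" and g: "g \<in> hom C a b" and "Fa f \<noteq> Fa g"
  obtains h :: "'u set \<Rightarrow> _"
  where "\<And>S. Fa (h S) \<in> hom D (Fo a) (Fo P)" and "inj (\<lambda>S. Fa (h S))"
proof -
  have "\<exists>u. u \<in> hom C a P \<and> (\<forall>i. Comp C (p i) u = (if i \<in> S then f else g))" for S
  proof -
    have "a \<in> Obj C" using hom_Obj[OF assms(1) f] by blast
    moreover have "\<forall>i\<in>UNIV. (if i \<in> S then f else g) \<in> hom C a b" using f g by simp
    ultimately obtain u where "u \<in> hom C a P"
      and "\<forall>i\<in>UNIV. Comp C (p i) u = (if i \<in> S then f else g)"
      by (rule product_tuple[OF assms(3)])
    then show ?thesis by blast
  qed
  then obtain h where h: "\<And>S. h S \<in> hom C a P"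
    and h_comp: "\<And>S i. Comp C (p i) (h S) = (if i \<in> S then f else g)"
    by metis
  have p: "p i \<in> hom C P b" for i
    using assms(3) unfolding is_product_def by simp
  have Fh_comp: "Comp D (Fa (p i)) (Fa (h S)) = (if i \<in> S then Fa f else Fa g)" for S i
    by (simp add: functor_Comp[OF assms(2) h p, symmetric] h_comp)
  have "inj (\<lambda>S. Fa (h S))"
  proof (rule injI)
    fix S T assume "Fa (h S) = Fa (h T)"
    then have eq: "(if i \<in> S then Fa f else Fa g) = (if i \<in> T then Fa f else Fa g)" for i
      using Fh_comp by metis
    have "i \<in> S \<longleftrightarrow> i \<in> T" for i
      using eq[of i] \<open>Fa f \<noteq> Fa g\<close> by (cases "i \<in> S"; cases "i \<in> T") simp_all
    then show "S = T" by blast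
  qed
  then show thesis using that functor_hom[OF assms(2) h] by blast
qed

lemma small_products_functor_identifies_parallel:
  fixes C :: "('o,'a) category" and D :: "('p,'b) category"
  assumes "is_category C" and "has_small_products TYPE('u) C"
    and "is_category D" and "essentially_small TYPE('u) D"
    and "is_functor C D Fo Fa"
    and f: "f \<in> hom C a b" and g: "g \<in> hom C a b"
  shows "Fa f = Fa g"
proof (rule ccontr)
  assume "Fa f \<noteq> Fa g"
  obtain H :: "'b \<Rightarrow> 'u" where H: "\<And>x y. inj_on H (hom D x y)"
    using essentially_small_hom_inj[OF assms(3,4)] by blast
  have "b \<in> Obj C" using hom_Obj[OF assms(1) f] by blast
  then have "\<exists>P p. is_product C (UNIV :: 'u set) (\<lambda>_. b) P p"
    using assms(2) unfolding has_small_products_def by simp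
  then obtain P p where power: "is_product C (UNIV :: 'u set) (\<lambda>_. b) P p"
    by blast
  obtain h :: "'u set \<Rightarrow> 'a"
    where Fh: "\<And>S. Fa (h S) \<in> hom D (Fo a) (Fo P)" and Fh_inj: "inj (\<lambda>S. Fa (h S))"
    using power_tuples_inj[OF assms(1,5) power f g \<open>Fa f \<noteq> Fa g\<close>] by blast
  have "inj (\<lambda>S. H (Fa (h S)))"
  proof (rule injI)
    fix S T assume "H (Fa (h S)) = H (Fa (h T))"
    then have "Fa (h S) = Fa (h T)" using inj_onD[OF H _ Fh Fh] by blast
    then show "S = T" by (rule injD[OF Fh_inj])
  qed
  then show False using no_inj_Pow by blast
qed

lemma strongly_connected_nat_iso_const:
  assumes C: "is_category C" and D: "is_category D" and F: "is_functor C D Fo Fa"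
    and "strongly_connected C" and c\<^sub>0: "c\<^sub>0 \<in> Obj C"
    and parallel: "\<And>f g x y. f \<in> hom C x y \<Longrightarrow> g \<in> hom C x y \<Longrightarrow> Fa f = Fa g"
  shows "\<exists>\<eta>. nat_iso C D Fo Fa (\<lambda>_. Fo c\<^sub>0) (\<lambda>_. Id D (Fo c\<^sub>0)) \<eta>"
proof -
  have arrow: "\<exists>k. k \<in> hom C c c'" if "c \<in> Obj C" "c' \<in> Obj C" for c c'
    using \<open>strongly_connected C\<close> that unfolding strongly_connected_def by blast
  define k where "k c = (SOME k. k \<in> hom C c c\<^sub>0)" for c
  have k: "k c \<in> hom C c c\<^sub>0" if "c \<in> Obj C" for c
    unfolding k_def using arrow[OF that c\<^sub>0] by (rule someI_ex)
  have Fk: "Fa (k c) \<in> hom D (Fo c) (Fo c\<^sub>0)" if "c \<in> Obj C" for c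
    using functor_hom[OF F k[OF that]] .
  have iso: "is_iso D (Fa (k c))" if c: "c \<in> Obj C" for c
  proof -
    obtain l where l: "l \<in> hom C c\<^sub>0 c" using arrow[OF c\<^sub>0 c] by blast
    have "Comp D (Fa l) (Fa (k c)) = Fa (Id C c)"
      using functor_Comp[OF F k[OF c] l] parallel[OF Comp_hom[OF C k[OF c] l] Id_hom[OF C c]]
      by simp
    moreover have "Comp D (Fa (k c)) (Fa l) = Fa (Id C c\<^sub>0)"
      using functor_Comp[OF F l k[OF c]] parallel[OF Comp_hom[OF C l k[OF c]] Id_hom[OF C c\<^sub>0]]
      by simp
    ultimately show ?thesis
      using is_isoI[OF Fk[OF c] functor_hom[OF F l]] functor_Id[OF F] c c\<^sub>0 by simp
  qed
  have natural: "Comp D (Id D (Fo c\<^sub>0)) (Fa (k (Dom C f))) = Comp D (Fa (k (Cod C f))) (Fa f)"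
    if "f \<in> Arr C" for f
  proof -
    define x y where "x = Dom C f" and "y = Cod C f"
    have f: "f \<in> hom C x y" using that unfolding hom_def x_def y_def by simp
    have x: "x \<in> Obj C" and y: "y \<in> Obj C" using hom_Obj[OF C f] by auto
    have "Comp D (Id D (Fo c\<^sub>0)) (Fa (k x)) = Fa (k x)" using Comp_Id_left[OF D Fk[OF x]] .
    also have "\<dots> = Fa (Comp C (k y) f)" using parallel[OF k[OF x] Comp_hom[OF C f k[OF y]]] .
    also have "\<dots> = Comp D (Fa (k y)) (Fa f)" using functor_Comp[OF F f k[OF y]] .
    finally show ?thesis unfolding x_def y_def .
  qed
  have "nat_iso C D Fo Fa (\<lambda>_. Fo c\<^sub>0) (\<lambda>_. Id D (Fo c\<^sub>0)) (\<lambda>c. Fa (k c))"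
    unfolding nat_iso_def using Fk iso natural by simp
  then show ?thesis by blast
qed

theorem corollary2p5:
  fixes C :: "('o,'a) category" and D :: "('p,'b) category"
    and Fo :: "'o \<Rightarrow> 'p" and Fa :: "'a \<Rightarrow> 'b"
  assumes "is_category C" and "strongly_connected C"
    and "has_small_products TYPE('u) C"
    and "is_category D" and "essentially_small TYPE('u) D"
    and "is_functor C D Fo Fa"
  shows "\<exists>d\<in>Obj D. \<exists>\<eta>. nat_iso C D Fo Fa (\<lambda>_. d) (\<lambda>_. Id D d) \<eta>"
proof -
  obtain c\<^sub>0 p where "is_product C ({} :: 'u set) (\<lambda>_. undefined) c\<^sub>0 p"
    using assms(3) unfolding has_small_products_def by blast
  then have c\<^sub>0: "c\<^sub>0 \<in> Obj C" unfolding is_product_def by blast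
  have "\<And>f g x y. f \<in> hom C x y \<Longrightarrow> g \<in> hom C x y \<Longrightarrow> Fa f = Fa g"
    using small_products_functor_identifies_parallel[OF assms(1,3-6)] by blast
  then show ?thesis
    using strongly_connected_nat_iso_const[OF assms(1,4,6,2) c\<^sub>0] functor_Obj[OF assms(6) c\<^sub>0]
    by blast
qed

end
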